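(* Let an FCA with state set $S$, neighborhood $m=l+1+r$, local rule $f$ and boundary type $b\in\{\text{null},\text{periodic}\}$ be given, and let $G$ be its reversibility graph. If $N$ is a negative vertex of $G$ with value $k\ge1$ and some circuit of length $r'$ passes through $N$, then for every integer $x\ge 0$ the FCA is not $(k+xr')$-cell-reversible.
   Context: A one-dimensional finite cellular automaton (FCA) is given by a state set $S=\{0,1,\dots,s-1\}$, integers $l,r\ge 0$ with neighborhood size $m=l+1+r\ge 2$, a local rule $f:S^m\to S$, and a boundary type $b\in\{\text{null},\text{periodic}\}$. For $n\ge 1$ the global map $\tau_n:S^n\to S^n$ sends $(x_0,\dots,x_{n-1})$ to $(y_0,\dots,y_{n-1})$ with $y_i=f(x_{i-l},\dots,x_{i+r})$, where for the null boundary $x_j=0$ whenever $j<0$ or $j>n-1$, and for the periodic boundary indices are taken modulo $n$. The FCA is $n$-cell-reversible if $\tau_n$ is a bijection (equivalently, since $S^n$ is finite, surjective). Reversibility graph (RG). Null boundary: vertices are subsets of $S^{m-1}$; the root is $N_0=\{(a_1,\dots,a_{m-1})\in S^{m-1}: a_1=\dots=a_l=0\}$; the acceptance set is $R=\{(a_1,\dots,a_{m-1})\in S^{m-1}: a_{m-r}=\dots=a_{m-1}=0\}$ (so $R=S^{m-1}$ if $r=0$); for a subset $N$ and $c\in S$, $\delta(N,c)=\{(a_1,\dots,a_{m-1})\in S^{m-1}:\exists a_0\in S,\ (a_0,\dots,a_{m-2})\in N,\ f(a_0,a_1,\dots,a_{m-1})=c\}$. Periodic boundary: vertices are subsets of $S^{m-1}\times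 S^{m-1}$; the root and the acceptance set are $N_0=R=\{(a,a):a\in S^{m-1}\}$; $\delta(N,c)=\{((a_1,\dots,a_{m-1}),(b_1,\dots,b_{m-1})):\exists b_0\in S,\ ((a_1,\dots,a_{m-1}),(b_0,\dots,b_{m-2}))\in N,\ f(b_0,\dots,b_{m-1})=c\}$. In both cases the RG is the directed graph whose vertex set consists of all subsets obtainable from $N_0$ by repeatedly applying $\delta$ (including $N_0$; equal subsets are the same vertex; the empty set may occur), with, for each vertex $N$ and each $c\in S$, an edge labelled $c$ from $N$ to $\delta(N,c)$. The value of a vertex $N$ is the length of a shortest directed path from $N_0$ to $N$. A vertex $N$ is negative if $N\cap R=\emptyset$. A circuit is an elementary directed cycle of the RG (a closed directed path with no repeated vertex other than its start = end; a loop is a circuit of length $1$); its length is its number of edges, and it passes through $N$ if $N$ is one of its vertices. *)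

theory Defs
  imports Main
begin

text \<open>States are S = {0..<s}; a configuration of n cells is a list of length n over S.
  The local rule f takes a list of length m = l+1+r (the neighbourhood x_{i-l},...,x_{i+r}).\<close>

datatype boundary = Null | Periodic

definition words :: "nat \<Rightarrow> nat \<Rightarrow> nat list set" where
  "words s n = {xs. length xs = n \<and> set xs \<subseteq> {..<s}}"

definition valid_fca :: "nat \<Rightarrow> nat \<Rightarrow> nat \<Rightarrow> (nat list \<Rightarrow> nat) \<Rightarrow> bool" where
  "valid_fca s l r f \<longleftrightarrow> 1 \<le> s \<and> 2 \<le> l + 1 + r \<and> (\<forall>xs \<in> words s (l + 1 + r). f xs < s)"

fun cell :: "boundary \<Rightarrow> nat \<Rightarrow> nat list \<Rightarrow> int \<Rightarrow> nat" where
  "cell Null n xs j = (if 0 \<le> j \<and> j < int n then xs ! nat j else 0)"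
| "cell Periodic n xs j = xs ! nat (j mod int n)"

definition global_map :: "nat \<Rightarrow> nat \<Rightarrow> (nat list \<Rightarrow> nat) \<Rightarrow> boundary \<Rightarrow> nat \<Rightarrow> nat list \<Rightarrow> nat list" where
  "global_map l r f b n xs =
     map (\<lambda>i. f (map (\<lambda>j. cell b n xs (int i - int l + int j)) [0..<l + 1 + r])) [0..<n]"

definition cell_reversible :: "nat \<Rightarrow> nat \<Rightarrow> nat \<Rightarrow> (nat list \<Rightarrow> nat) \<Rightarrow> boundary \<Rightarrow> nat \<Rightarrow> bool" where
  "cell_reversible s l r f b n \<longleftrightarrow>
     bij_betw (global_map l r f b n) (words s n) (words s n)"

text \<open>Edges: for each vertex N and each label c < s an edge labelled c from N to delta N c.\<close>

inductive_set rg_vertices :: "nat \<Rightarrow> 'v \<Rightarrow> ('v \<Rightarrow> nat \<Rightarrow> 'v) \<Rightarrow> 'v set"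
  for s :: nat and N0 :: 'v and delta :: "'v \<Rightarrow> nat \<Rightarrow> 'v" where
  root: "N0 \<in> rg_vertices s N0 delta"
| step: "N \<in> rg_vertices s N0 delta \<Longrightarrow> c < s \<Longrightarrow> delta N c \<in> rg_vertices s N0 delta"

definition run :: "('v \<Rightarrow> nat \<Rightarrow> 'v) \<Rightarrow> 'v \<Rightarrow> nat list \<Rightarrow> 'v" where
  "run delta N cs = fold (\<lambda>c M. delta M c) cs N"

definition rg_value :: "nat \<Rightarrow> 'v \<Rightarrow> ('v \<Rightarrow> nat \<Rightarrow> 'v) \<Rightarrow> 'v \<Rightarrow> nat" where
  "rg_value s N0 delta N =
     (LEAST k. \<exists>cs. length cs = k \<and> set cs \<subseteq> {..<s} \<and> run delta N0 cs = N)"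

definition circuit_through :: "nat \<Rightarrow> 'v \<Rightarrow> ('v \<Rightarrow> nat \<Rightarrow> 'v) \<Rightarrow> 'v \<Rightarrow> nat \<Rightarrow> bool" where
  "circuit_through s N0 delta N L \<longleftrightarrow>
     (\<exists>v :: nat \<Rightarrow> 'v. 1 \<le> L \<and> v L = v 0 \<and> inj_on v {0..<L}
        \<and> (\<forall>i \<le> L. v i \<in> rg_vertices s N0 delta)
        \<and> (\<forall>i < L. \<exists>c < s. delta (v i) c = v (Suc i))
        \<and> (\<exists>j < L. v j = N))"

definition neg_vertex_circuit :: "nat \<Rightarrow> 'e set \<Rightarrow> ('e set \<Rightarrow> nat \<Rightarrow> 'e set) \<Rightarrow> 'e set \<Rightarrow> nat \<Rightarrow> nat \<Rightarrow> bool" where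
  "neg_vertex_circuit s N0 delta R k L \<longleftrightarrow>
     (\<exists>N. N \<in> rg_vertices s N0 delta \<and> N \<inter> R = {} \<and> rg_value s N0 delta N = k
          \<and> circuit_through s N0 delta N L)"

definition null_root :: "nat \<Rightarrow> nat \<Rightarrow> nat \<Rightarrow> nat list set" where
  "null_root s l r = {a \<in> words s (l + r). \<forall>i < l. a ! i = 0}"

definition null_acc :: "nat \<Rightarrow> nat \<Rightarrow> nat \<Rightarrow> nat list set" where
  "null_acc s l r = {a \<in> words s (l + r). \<forall>i. l \<le> i \<and> i < l + r \<longrightarrow> a ! i = 0}"

definition null_delta :: "nat \<Rightarrow> nat \<Rightarrow> nat \<Rightarrow> (nat list \<Rightarrow> nat) \<Rightarrow> nat list set \<Rightarrow> nat \<Rightarrow> nat list set" where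
  "null_delta s l r f N c =
     {a \<in> words s (l + r). \<exists>a0 < s. (a0 # butlast a) \<in> N \<and> f (a0 # a) = c}"

definition per_root :: "nat \<Rightarrow> nat \<Rightarrow> nat \<Rightarrow> (nat list \<times> nat list) set" where
  "per_root s l r = {(a, a) | a. a \<in> words s (l + r)}"

definition per_delta :: "nat \<Rightarrow> nat \<Rightarrow> nat \<Rightarrow> (nat list \<Rightarrow> nat) \<Rightarrow>
    (nat list \<times> nat list) set \<Rightarrow> nat \<Rightarrow> (nat list \<times> nat list) set" where
  "per_delta s l r f N c =
     {(a, bs). a \<in> words s (l + r) \<and> bs \<in> words s (l + r) \<and>
        (\<exists>b0 < s. (a, b0 # butlast bs) \<in> N \<and> f (b0 # bs) = c)}"

fun rg_neg_vertex_circuit :: "nat \<Rightarrow> nat \<Rightarrow> nat \<Rightarrow> (nat list \<Rightarrow> nat) \<Rightarrow> boundary \<Rightarrow> nat \<Rightarrow> nat \<Rightarrow> bool" where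
  "rg_neg_vertex_circuit s l r f Null k L =
     neg_vertex_circuit s (null_root s l r) (null_delta s l r f) (null_acc s l r) k L"
| "rg_neg_vertex_circuit s l r f Periodic k L =
     neg_vertex_circuit s (per_root s l r) (per_delta s l r f) (per_root s l r) k L"

end

theory Submission
  imports Defs
begin

text \<open>Reading an image configuration y = \<tau>_n(xs) letter by letter, the RG root moves to a vertex
  containing the current (m-1)-window of xs (for the periodic boundary: paired with the initial
  window). After all n letters this window lies in the acceptance set, so every image word
  leads to a non-negative vertex. On the other hand, a shortest path to the negative vertex N
  (length k) followed by x turns around the circuit (length r') is a word of length k + x r'
  leading to N. This word has no preimage, so \<tau>_(k + x r') is not surjective.\<close>

lemma run_Nil [simp]: "run d N [] = N"
  by (simp add: run_def)

lemma run_append: "run d N (cs @ ds) = run d (run d N cs) ds"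
  by (simp add: run_def)

lemma run_snoc: "run d N (cs @ [c]) = d (run d N cs) c"
  by (simp add: run_def)

lemma run_concat_replicate_loop:
  "run d N ds = N \<Longrightarrow> run d N (concat (replicate x ds)) = N"
  by (induction x) (simp_all add: run_append)

lemma rg_vertices_reachable:
  "N \<in> rg_vertices s N0 d \<Longrightarrow> \<exists>cs. set cs \<subseteq> {..<s} \<and> run d N0 cs = N"
proof (induction rule: rg_vertices.induct)
  case root
  show ?case by (intro exI[of _ "[]"]) simp
next
  case (step N c)
  then obtain cs where "set cs \<subseteq> {..<s}" "run d N0 cs = N" by blast
  with step.hyps(2) show ?case by (intro exI[of _ "cs @ [c]"]) (auto simp: run_snoc)
qed

lemma rg_value_shortest_word:
  assumes "N \<in> rg_vertices s N0 d"
  shows "\<exists>cs. length cs = rg_value s N0 d N \<and> set cs \<subseteq> {..<s} \<and> run d N0 cs = N"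
proof -
  obtain cs where "set cs \<subseteq> {..<s}" "run d N0 cs = N"
    using rg_vertices_reachable[OF assms] by blast
  then have "\<exists>cs'. length cs' = length cs \<and> set cs' \<subseteq> {..<s} \<and> run d N0 cs' = N" by blast
  then show ?thesis unfolding rg_value_def by (rule LeastI)
qed

lemma path_segment_word:
  assumes edges: "\<forall>i < L. \<exists>c < s. d (v i) c = v (Suc i)"
    and "a \<le> b" "b \<le> L"
  shows "\<exists>ds. length ds = b - a \<and> set ds \<subseteq> {..<s} \<and> run d (v a) ds = v b"
  using assms(2,3)
proof (induction b)
  case 0
  then show ?case by (intro exI[of _ "[]"]) simp
next
  case (Suc b)
  show ?case
  proof (cases "a = Suc b")
    case True
    then show ?thesis by (intro exI[of _ "[]"]) simp
  next
    case False
    with Suc.prems have "a \<le> b" "b < L" by auto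
    then obtain ds where ds: "length ds = b - a" "set ds \<subseteq> {..<s}" "run d (v a) ds = v b"
      using Suc.IH by auto
    obtain c where "c < s" "d (v b) c = v (Suc b)" using edges \<open>b < L\<close> by blast
    with ds \<open>a \<le> b\<close> show ?thesis
      by (intro exI[of _ "ds @ [c]"]) (auto simp: run_snoc Suc_diff_le)
  qed
qed

text \<open>Go around the circuit starting at v j: first from v j to v L = v 0, then from v 0 to v j.\<close>
lemma circuit_through_loop_word:
  assumes "circuit_through s N0 d N L"
  shows "\<exists>ds. length ds = L \<and> set ds \<subseteq> {..<s} \<and> run d N ds = N"
proof -
  obtain v j where v: "v L = v 0" "\<forall>i < L. \<exists>c < s. d (v i) c = v (Suc i)" "j < L" "v j = N"
    using assms unfolding circuit_through_def by blast
  obtain ds1 where "length ds1 = L - j" "set ds1 \<subseteq> {..<s}" "run d (v j) ds1 = v L"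
    using path_segment_word[OF v(2), of j L] v(3) by auto
  moreover obtain ds2 where "length ds2 = j" "set ds2 \<subseteq> {..<s}" "run d (v 0) ds2 = v j"
    using path_segment_word[OF v(2), of 0 j] v(3) by auto
  ultimately show ?thesis using v by (intro exI[of _ "ds1 @ ds2"]) (auto simp: run_append)
qed

lemma neg_vertex_circuit_rejected_word:
  assumes "neg_vertex_circuit s N0 d R k L"
  shows "\<exists>ys. length ys = k + x * L \<and> set ys \<subseteq> {..<s} \<and> run d N0 ys \<inter> R = {}"
proof -
  obtain N where N: "N \<in> rg_vertices s N0 d" "N \<inter> R = {}" "rg_value s N0 d N = k"
      "circuit_through s N0 d N L"
    using assms unfolding neg_vertex_circuit_def by blast
  obtain cs where cs: "length cs = k" "set cs \<subseteq> {..<s}" "run d N0 cs = N"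
    using rg_value_shortest_word[OF N(1)] N(3) by auto
  obtain ds where ds: "length ds = L" "set ds \<subseteq> {..<s}" "run d N ds = N"
    using circuit_through_loop_word[OF N(4)] by blast
  have "length (concat (replicate x ds)) = x * L"
    using ds(1) by (simp add: length_concat sum_list_replicate)
  with cs ds N(2) show ?thesis
    by (intro exI[of _ "cs @ concat (replicate x ds)"])
      (auto simp: run_append run_concat_replicate_loop)
qed

lemma not_cell_reversible_if_images_accepted:
  assumes "neg_vertex_circuit s N0 d R k L"
    and accepted: "\<And>xs. xs \<in> words s (k + x * L)
      \<Longrightarrow> run d N0 (global_map l r f b (k + x * L) xs) \<inter> R \<noteq> {}"
  shows "\<not> cell_reversible s l r f b (k + x * L)"
proof
  assume "cell_reversible s l r f b (k + x * L)"
  then have onto: "global_map l r f b (k + x * L) ` words s (k + x * L) = words s (k + x * L)"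
    by (simp add: cell_reversible_def bij_betw_def)
  obtain ys where ys: "length ys = k + x * L" "set ys \<subseteq> {..<s}" "run d N0 ys \<inter> R = {}"
    using neg_vertex_circuit_rejected_word[OF assms(1)] by blast
  then have "ys \<in> words s (k + x * L)" by (simp add: words_def)
  then obtain xs where "xs \<in> words s (k + x * L)" "ys = global_map l r f b (k + x * L) xs"
    using onto by force
  with accepted ys(3) show False by blast
qed

definition window :: "boundary \<Rightarrow> nat \<Rightarrow> nat list \<Rightarrow> int \<Rightarrow> nat \<Rightarrow> nat list" where
  "window b n xs p len = map (\<lambda>j. cell b n xs (p + int j)) [0..<len]"

lemma length_window [simp]: "length (window b n xs p len) = len"
  by (simp add: window_def)

lemma nth_window: "j < len \<Longrightarrow> window b n xs p len ! j = cell b n xs (p + int j)"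
  by (simp add: window_def)

lemma window_Suc: "window b n xs p (Suc len) = cell b n xs p # window b n xs (p + 1) len"
  unfolding window_def map_upt_Suc by (simp add: algebra_simps)

lemma butlast_window_Suc: "butlast (window b n xs p (Suc len)) = window b n xs p len"
  by (simp add: window_def)

lemma window_shift:
  "0 < len \<Longrightarrow> cell b n xs p # butlast (window b n xs (p + 1) len) = window b n xs p len"
  by (cases len) (simp_all only: butlast_window_Suc window_Suc[of b n xs p] less_irrefl)

lemma cell_less:
  assumes "xs \<in> words s n" "0 < n" "0 < s"
  shows "cell b n xs j < s"
proof (cases b)
  case Null
  have "0 \<le> j \<Longrightarrow> j < int n \<Longrightarrow> xs ! nat j \<in> set xs"
    using assms(1) by (intro nth_mem) (auto simp: words_def)
  moreover have "set xs \<subseteq> {..<s}" using assms(1) by (simp add: words_def)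
  ultimately show ?thesis using assms(3) Null by auto
next
  case Periodic
  have "nat (j mod int n) < n" using assms(2) by (simp add: nat_less_iff)
  with assms Periodic show ?thesis by (auto simp: words_def dest!: nth_mem)
qed

lemma window_in_words:
  "xs \<in> words s n \<Longrightarrow> 0 < n \<Longrightarrow> 0 < s \<Longrightarrow> window b n xs p len \<in> words s len"
  by (auto simp: words_def window_def cell_less)

lemma length_global_map [simp]: "length (global_map l r f b n xs) = n"
  by (simp add: global_map_def)

lemma nth_global_map:
  "i < n \<Longrightarrow> global_map l r f b n xs ! i = f (window b n xs (int i - int l) (l + 1 + r))"
  by (simp add: global_map_def window_def)

lemma take_Suc_global_map:
  "i < n \<Longrightarrow> take (Suc i) (global_map l r f b n xs)
     = take i (global_map l r f b n xs) @ [f (window b n xs (int i - int l) (Suc (l + r)))]"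
  by (simp add: take_Suc_conv_app_nth nth_global_map)

lemma window_in_null_delta:
  assumes "xs \<in> words s n" "0 < n" "0 < s" "0 < l + r"
    and "window b n xs p (l + r) \<in> N"
  shows "window b n xs (p + 1) (l + r) \<in> null_delta s l r f N (f (window b n xs p (Suc (l + r))))"
  using assms(5) window_shift[OF assms(4), of b n xs p] window_in_words[OF assms(1-3)]
    cell_less[OF assms(1-3), of b p]
  unfolding null_delta_def window_Suc by (auto intro!: exI[of _ "cell b n xs p"])

lemma window_in_per_delta:
  assumes "xs \<in> words s n" "0 < n" "0 < s" "0 < l + r"
    and "(a, window b n xs p (l + r)) \<in> N" "a \<in> words s (l + r)"
  shows "(a, window b n xs (p + 1) (l + r))
           \<in> per_delta s l r f N (f (window b n xs p (Suc (l + r))))"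
  using assms(5,6) window_shift[OF assms(4), of b n xs p] window_in_words[OF assms(1-3)]
    cell_less[OF assms(1-3), of b p]
  unfolding per_delta_def window_Suc by (auto intro!: exI[of _ "cell b n xs p"])

lemma valid_fca_pos:
  assumes "valid_fca s l r f"
  shows "0 < s" "0 < l + r"
  using assms by (auto simp: valid_fca_def)

lemma null_run_contains_window:
  assumes "valid_fca s l r f" "xs \<in> words s n" "0 < n" "i \<le> n"
  shows "window Null n xs (int i - int l) (l + r)
           \<in> run (null_delta s l r f) (null_root s l r) (take i (global_map l r f Null n xs))"
  using assms(4)
proof (induction i)
  case 0
  show ?case
    using window_in_words[OF assms(2,3) valid_fca_pos(1)[OF assms(1)]]
    by (auto simp: null_root_def nth_window)
next
  case (Suc i)
  then have "i < n" by simp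
  have "int (Suc i) - int l = (int i - int l) + 1" by simp
  with Suc window_in_null_delta[OF assms(2,3) valid_fca_pos[OF assms(1)]] \<open>i < n\<close>
  show ?case by (simp only: take_Suc_global_map run_snoc)
qed

lemma null_global_map_accepted:
  assumes "valid_fca s l r f" "xs \<in> words s n" "0 < n"
  shows "run (null_delta s l r f) (null_root s l r) (global_map l r f Null n xs)
           \<inter> null_acc s l r \<noteq> {}"
proof -
  let ?w = "window Null n xs (int n - int l) (l + r)"
  have "?w \<in> run (null_delta s l r f) (null_root s l r) (global_map l r f Null n xs)"
    using null_run_contains_window[OF assms, of n] by simp
  moreover have "?w \<in> null_acc s l r"
    using window_in_words[OF assms(2,3) valid_fca_pos(1)[OF assms(1)]]
    by (auto simp: null_acc_def nth_window)
  ultimately show ?thesis by blast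
qed

lemma per_run_contains_window:
  assumes "valid_fca s l r f" "xs \<in> words s n" "0 < n" "i \<le> n"
  shows "(window Periodic n xs (- int l) (l + r), window Periodic n xs (int i - int l) (l + r))
           \<in> run (per_delta s l r f) (per_root s l r) (take i (global_map l r f Periodic n xs))"
  using assms(4)
proof (induction i)
  case 0
  show ?case
    using window_in_words[OF assms(2,3) valid_fca_pos(1)[OF assms(1)]]
    by (auto simp: per_root_def)
next
  case (Suc i)
  then have "i < n" by simp
  have "int (Suc i) - int l = (int i - int l) + 1" by simp
  with Suc window_in_per_delta[OF assms(2,3) valid_fca_pos[OF assms(1)]] \<open>i < n\<close>
    window_in_words[OF assms(2,3) valid_fca_pos(1)[OF assms(1)]]
  show ?case by (simp only: take_Suc_global_map run_snoc)
qed

lemma per_global_map_accepted: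
  assumes "valid_fca s l r f" "xs \<in> words s n" "0 < n"
  shows "run (per_delta s l r f) (per_root s l r) (global_map l r f Periodic n xs)
           \<inter> per_root s l r \<noteq> {}"
proof -
  let ?w0 = "window Periodic n xs (- int l) (l + r)"
  have "(int n - int l + int j) mod int n = (- int l + int j) mod int n" for j
    by (metis add.commute add_diff_eq diff_add_eq mod_add_self2 uminus_add_conv_diff)
  then have "window Periodic n xs (int n - int l) (l + r) = ?w0"
    by (simp add: window_def)
  then have "(?w0, ?w0) \<in> run (per_delta s l r f) (per_root s l r) (global_map l r f Periodic n xs)"
    using per_run_contains_window[OF assms, of n] by simp
  moreover have "(?w0, ?w0) \<in> per_root s l r"
    using window_in_words[OF assms(2,3) valid_fca_pos(1)[OF assms(1)]] by (auto simp: per_root_def)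
  ultimately show ?thesis by blast
qed

theorem theorem2:
  fixes s l r :: nat and f :: "nat list \<Rightarrow> nat" and b :: boundary
    and k r' x :: nat
  assumes "valid_fca s l r f"
    and "rg_neg_vertex_circuit s l r f b k r'"
    and "1 \<le> k"
  shows "\<not> cell_reversible s l r f b (k + x * r')"
proof -
  have n: "0 < k + x * r'" using assms(3) by simp
  show ?thesis
  proof (cases b)
    case Null
    with assms(2) have "neg_vertex_circuit s (null_root s l r) (null_delta s l r f) (null_acc s l r) k r'"
      by simp
    from not_cell_reversible_if_images_accepted[OF this null_global_map_accepted[OF assms(1) _ n]]
    show ?thesis unfolding Null .
  next
    case Periodic
    with assms(2) have "neg_vertex_circuit s (per_root s l r) (per_delta s l r f) (per_root s l r) k r'"
      by simp
    from not_cell_reversible_if_images_accepted[OF this per_global_map_accepted[OF assms(1) _ n]]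
    show ?thesis unfolding Periodic .
  qed
qed

end
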